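(* The set $\{A/B : A,B\in\mathtt{APAL}\}$ is dense in the positive real numbers $\mathbb{R}^{+}$.
   Context: A positive integer $n$ is antipalindromic if its binary representation $w=w_1w_2\cdots w_L$ (most significant digit first, no leading zeros) has even length $L$ and the second half is the reverse of the bitwise complement of the first half, i.e. $w_i+w_{L+1-i}=1$ for all $i$. For example $52=(110100)_2$ is antipalindromic. $\mathtt{APAL}=\{2,10,12,38,42,52,56,\dots\}$ denotes the set of antipalindromic numbers. *)

theory Defs
  imports "HOL-Analysis.Analysis"
begin

definition binlen :: "nat \<Rightarrow> nat" where
  "binlen n = (LEAST L. n < 2 ^ L)"

text \<open>Digit w_i (i = 1..L, most significant first) is bit (L - i) of n, so
  w_i + w_(L+1-i) = 1 becomes: bit j and bit (L-1-j) differ for all j < L.\<close>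
definition antipalindromic :: "nat \<Rightarrow> bool" where
  "antipalindromic n \<longleftrightarrow> n > 0 \<and> even (binlen n) \<and>
     (\<forall>j < binlen n. (n div 2 ^ j) mod 2 + (n div 2 ^ (binlen n - 1 - j)) mod 2 = 1)"

definition APAL :: "nat set" where
  "APAL = {n. antipalindromic n}"

end

theory Submission
  imports Defs
begin

text \<open>An antipalindrome of binary length 2k is determined by its upper half, which may be
  any k-digit number u; it then lies in [u 2^k, (u + 1) 2^k). So the numbers A / 4^k with
  A in APAL of length 2k approximate every point of [1/2, 1] to within 2^-k. Every x > 0
  has the form (a / b) 4^p / 4^q with a, b in [1/2, 1], and the quotient of approximations
  of a and b of lengths 2(k + p) and 2(k + q) tends to x as k grows.\<close>

lemma binlen_eqI:
  assumes "2 ^ (L - 1) \<le> n" and "n < 2 ^ L" and "0 < L"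
  shows "binlen n = L"
  unfolding binlen_def
proof (rule Least_equality)
  show "n < 2 ^ L" by fact
next
  fix M assume "n < 2 ^ M"
  with assms(1) have "(2::nat) ^ (L - 1) < 2 ^ M" by linarith
  with \<open>0 < L\<close> show "L \<le> M" by simp
qed

lemma horner_sum_ge_if_last_bit:
  assumes "bs \<noteq> []" and "last bs"
  shows "2 ^ (length bs - 1) \<le> (horner_sum of_bool 2 bs :: nat)"
proof -
  obtain cs where "bs = cs @ [True]"
    using assms by (metis append_butlast_last_id)
  then show ?thesis
    by (simp add: horner_sum_append)
qed

lemma binlen_horner_sum:
  assumes "bs \<noteq> []" and "last bs"
  shows "binlen (horner_sum of_bool 2 bs) = length bs"
  using assms by (intro binlen_eqI horner_sum_ge_if_last_bit horner_sum_bound) auto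

lemma horner_sum_digit:
  assumes "j < length bs"
  shows "(horner_sum of_bool 2 bs div 2 ^ j) mod 2 = (of_bool (bs ! j) :: nat)"
  using assms bit_horner_sum_bit_iff[where 'a = nat, of bs j]
  by (simp flip: of_bool_odd_eq_mod_2 bit_iff_odd)

lemma even_length_if_rev_eq_map_Not:
  assumes "rev bs = map Not bs"
  shows "even (length bs)"
proof (rule ccontr)
  assume "odd (length bs)"
  define j where "j = length bs div 2"
  have "j < length bs" and "length bs - 1 - j = j"
    using \<open>odd (length bs)\<close> by (auto simp: j_def elim!: oddE)
  then have "bs ! j = rev bs ! j" by (simp add: rev_nth)
  also have "\<dots> = (\<not> bs ! j)" using assms \<open>j < length bs\<close> by simp
  finally show False by simp
qed

text \<open>Bit lists are least significant bit first (as for horner_sum); since the antipalindrome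
  condition is invariant under reversing the word, it becomes rev bs = map Not bs.\<close>

lemma antipalindromic_horner_sum:
  assumes "bs \<noteq> []" and "last bs" and rev: "rev bs = map Not bs"
  shows "antipalindromic (horner_sum of_bool 2 bs)"
  unfolding antipalindromic_def binlen_horner_sum[OF assms(1,2)]
proof (intro conjI allI impI)
  show "0 < (horner_sum of_bool 2 bs :: nat)"
    using horner_sum_ge_if_last_bit[OF assms(1,2)] by (meson less_le_trans pos2 zero_less_power)
  show "even (length bs)" using rev by (rule even_length_if_rev_eq_map_Not)
  fix j assume j: "j < length bs"
  have "bs ! (length bs - 1 - j) = (\<not> bs ! j)"
    using arg_cong[OF rev, of "\<lambda>xs. xs ! j"] j by (simp add: rev_nth)
  with j show "horner_sum of_bool 2 bs div 2 ^ j mod 2 +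
      horner_sum of_bool 2 bs div 2 ^ (length bs - 1 - j) mod 2 = (1::nat)"
    by (simp add: horner_sum_digit)
qed

lemma ex_APAL_between:
  assumes lower: "2 ^ (k - 1) \<le> u" and upper: "u < 2 ^ k"
  shows "\<exists>A\<in>APAL. u * 2 ^ k \<le> A \<and> A < (u + 1) * 2 ^ k"
proof -
  have "0 < k" using lower upper by (cases k) auto
  define bs where "bs = map (bit u) [0..<k]"
  define cs where "cs = rev (map Not bs) @ bs"
  define r :: nat where "r = horner_sum of_bool 2 (rev (map Not bs))"
  have "horner_sum of_bool 2 bs = u"
    unfolding bs_def horner_sum_bit_eq_take_bit using upper by (rule take_bit_nat_eq_self)
  then have cs_eq: "horner_sum of_bool 2 cs = r + 2 ^ k * u"
    by (simp add: cs_def r_def horner_sum_append bs_def)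
  have "r < 2 ^ k"
    using horner_sum_bound[of "rev (map Not bs)"] by (simp add: r_def bs_def)
  have "u < 2 * 2 ^ (k - 1)"
    using upper \<open>0 < k\<close> by (cases k) auto
  with lower have "u div 2 ^ (k - 1) = 1"
    by (intro div_nat_eqI) auto
  then have "last cs"
    using \<open>0 < k\<close> by (simp add: cs_def bs_def last_map bit_iff_odd)
  moreover have "cs \<noteq> []" and "rev cs = map Not cs"
    using \<open>0 < k\<close> by (simp_all add: cs_def bs_def rev_map)
  ultimately have "horner_sum of_bool 2 cs \<in> APAL"
    by (simp add: APAL_def antipalindromic_horner_sum)
  with cs_eq \<open>r < 2 ^ k\<close> show ?thesis
    by (intro bexI[of _ "horner_sum of_bool 2 cs"]) auto
qed

lemma ex_APAL_near_multiple:
  fixes t :: real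
  assumes "2 ^ (k - 1) \<le> t" and "t \<le> 2 ^ k" and "0 < k"
  shows "\<exists>A\<in>APAL. \<bar>real A - t * 2 ^ k\<bar> \<le> 2 ^ k"
proof -
  define u where "u = min (nat \<lfloor>t\<rfloor>) (2 ^ k - 1)"
    \<comment> \<open>capped so that u stays a k-digit number when t = 2^k\<close>
  have "0 \<le> t"
    using assms(1) by (rule order.trans[rotated]) simp
  have "2 ^ (k - 1) \<le> nat \<lfloor>t\<rfloor>"
    using assms(1) by (intro le_nat_floor) simp
  moreover have "(2::nat) ^ (k - 1) < 2 ^ k"
    using \<open>0 < k\<close> by simp
  ultimately have "2 ^ (k - 1) \<le> u"
    unfolding u_def by linarith
  moreover have "u < 2 ^ k"
    unfolding u_def using zero_less_power[of "2::nat" k] by linarith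
  ultimately obtain A where "A \<in> APAL" and A_lower: "u * 2 ^ k \<le> A" and A_upper: "A < (u + 1) * 2 ^ k"
    using ex_APAL_between by blast
  have "real u \<le> real (nat \<lfloor>t\<rfloor>)"
    by (simp add: u_def)
  also have "\<dots> \<le> t"
    using \<open>0 \<le> t\<close> by (rule of_nat_floor)
  finally have "real u * 2 ^ k \<le> t * 2 ^ k"
    by (simp add: mult_right_mono)
  moreover have "t \<le> real u + 1"
    using \<open>0 \<le> t\<close> assms(2) by (auto simp: u_def min_def of_nat_diff)
  then have "t * 2 ^ k \<le> real u * 2 ^ k + 2 ^ k"
    by (metis distrib_right mult_1 mult_right_mono zero_le_numeral zero_le_power)
  moreover have "real u * 2 ^ k \<le> real A"
    using of_nat_mono[OF A_lower, where 'a = real] by simp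
  moreover have "real A \<le> real u * 2 ^ k + 2 ^ k"
    using of_nat_mono[OF less_imp_le[OF A_upper], where 'a = real] by (simp add: distrib_right)
  ultimately have "\<bar>real A - t * 2 ^ k\<bar> \<le> 2 ^ k"
    by linarith
  with \<open>A \<in> APAL\<close> show ?thesis by blast
qed

lemma ex_APAL_near:
  fixes a :: real
  assumes "1/2 \<le> a" and "a \<le> 1" and "0 < k"
  shows "\<exists>A\<in>APAL. \<bar>real A / 4 ^ k - a\<bar> \<le> 1 / 2 ^ k"
proof -
  have "(2::real) ^ k = 2 * 2 ^ (k - 1)"
    using \<open>0 < k\<close> by (cases k) auto
  with assms obtain A where "A \<in> APAL" and deviation: "\<bar>real A - a * 2 ^ k * 2 ^ k\<bar> \<le> 2 ^ k"
    using ex_APAL_near_multiple[of k "a * 2 ^ k"] by auto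
  have "\<bar>real A / 4 ^ k - a\<bar> = \<bar>real A - a * 2 ^ k * 2 ^ k\<bar> / (2 ^ k * 2 ^ k)"
    by (simp add: field_simps flip: power_mult_distrib)
  also have "\<dots> \<le> 2 ^ k / (2 ^ k * 2 ^ k)"
    by (rule divide_right_mono[OF deviation]) simp
  also have "\<dots> = 1 / 2 ^ k"
    by simp
  finally show ?thesis
    using \<open>A \<in> APAL\<close> by blast
qed

lemma APAL_sequence_tendsto:
  fixes a :: real
  assumes "1/2 \<le> a" and "a \<le> 1"
  obtains A where "\<And>k. A k \<in> APAL" and "(\<lambda>k. real (A k) / 4 ^ k) \<longlonglongrightarrow> a"
proof -
  have "\<forall>k. \<exists>B\<in>APAL. \<bar>real B / 4 ^ Suc k - a\<bar> \<le> 1 / 2 ^ Suc k"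
    using ex_APAL_near[OF assms] by blast
  then obtain B where B: "\<And>k. B k \<in> APAL" "\<And>k. \<bar>real (B k) / 4 ^ Suc k - a\<bar> \<le> 1 / 2 ^ Suc k"
    by metis
  define A where "A k = B (k - 1)" for k
    \<comment> \<open>no antipalindrome has length 0, so index 0 just repeats index 1\<close>
  have "(\<lambda>k. 1 / 2 ^ k :: real) \<longlonglongrightarrow> 0"
    by (rule LIMSEQ_divide_realpow_zero) simp
  then have null: "(\<lambda>k. 1 / 2 ^ Suc k :: real) \<longlonglongrightarrow> 0"
    by (rule LIMSEQ_Suc)
  have "(\<lambda>k. real (B k) / 4 ^ Suc k - a) \<longlonglongrightarrow> 0"
    by (rule Lim_null_comparison[OF always_eventually null]) (simp only: real_norm_def B(2) simp_thms)
  then have "(\<lambda>k. real (A (Suc k)) / 4 ^ Suc k) \<longlonglongrightarrow> a"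
    by (simp add: A_def LIM_zero_iff)
  then have "(\<lambda>k. real (A k) / 4 ^ k) \<longlonglongrightarrow> a"
    by (rule LIMSEQ_imp_Suc)
  with B(1) show ?thesis
    by (intro that[of A]) (simp_all add: A_def)
qed

lemma power4_quotient_in_closure_APAL_quotients:
  fixes a b :: real
  assumes "1/2 \<le> a" "a \<le> 1" "1/2 \<le> b" "b \<le> 1"
  shows "a / b * 4 ^ p / 4 ^ q \<in> closure {real A / real B | A B. A \<in> APAL \<and> B \<in> APAL}"
proof -
  obtain A where A: "\<And>k. A k \<in> APAL" "(\<lambda>k. real (A k) / 4 ^ k) \<longlonglongrightarrow> a"
    using APAL_sequence_tendsto[OF assms(1,2)] by blast
  obtain B where B: "\<And>k. B k \<in> APAL" "(\<lambda>k. real (B k) / 4 ^ k) \<longlonglongrightarrow> b"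
    using APAL_sequence_tendsto[OF assms(3,4)] by blast
  have "(\<lambda>k. real (A (k + p)) / 4 ^ (k + p) / (real (B (k + q)) / 4 ^ (k + q)) * 4 ^ p / 4 ^ q)
      \<longlonglongrightarrow> a / b * 4 ^ p / 4 ^ q"
    using assms LIMSEQ_ignore_initial_segment[OF A(2), of p] LIMSEQ_ignore_initial_segment[OF B(2), of q]
    by (intro tendsto_intros) auto
  moreover have "real (A (k + p)) / 4 ^ (k + p) / (real (B (k + q)) / 4 ^ (k + q)) * 4 ^ p / 4 ^ q
      = real (A (k + p)) / real (B (k + q))" for k
    by (simp add: power_add)
  ultimately have "(\<lambda>k. real (A (k + p)) / real (B (k + q))) \<longlonglongrightarrow> a / b * 4 ^ p / 4 ^ q"
    by simp
  moreover have "real (A (k + p)) / real (B (k + q)) \<in> {real A / real B | A B. A \<in> APAL \<and> B \<in> APAL}" for k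
    using A(1) B(1) by blast
  ultimately show ?thesis
    unfolding closure_sequential by (intro exI[of _ "\<lambda>k. real (A (k + p)) / real (B (k + q))"]) blast
qed

lemma power4_rescaling_into_interval:
  fixes x :: real
  assumes "0 < x"
  obtains p q :: nat where "1/2 \<le> x * 4 ^ q / 4 ^ p" and "x * 4 ^ q / 4 ^ p \<le> 2"
proof -
  obtain q :: nat where "1 / x < 4 ^ q"
    using real_arch_pow[of 4 "1 / x"] by auto
  then have "1 \<le> x * 4 ^ q"
    using assms by (simp add: field_simps)
  define z where "z = x * 4 ^ q"
  obtain n :: nat where "z < 4 ^ n"
    using real_arch_pow[of 4 z] by auto
  then have "z \<le> 2 * 4 ^ n"
    using zero_le_power[of "4::real" n] by linarith
  show ?thesis
  proof (cases "z \<le> 2")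
    case True
    with \<open>1 \<le> x * 4 ^ q\<close> show ?thesis
      by (intro that[of q 0]) (simp_all add: z_def)
  next
    case False
    then obtain p where "z \<le> 2 * 4 ^ p" and minimal: "\<forall>i<p. \<not> z \<le> 2 * 4 ^ i"
      using ex_least_nat_le[of "\<lambda>i. z \<le> 2 * 4 ^ i", OF \<open>z \<le> 2 * 4 ^ n\<close>] by auto
    with False obtain i where "p = Suc i"
      by (cases p) auto
    with minimal have "4 ^ p \<le> 2 * z"
      by auto
    with \<open>z \<le> 2 * 4 ^ p\<close> show ?thesis
      by (intro that[of q p]) (simp_all add: z_def field_simps)
  qed
qed

theorem theorem12:
  shows "{x::real. x > 0} \<subseteq> closure {real A / real B | A B. A \<in> APAL \<and> B \<in> APAL}"
proof
  fix x :: real assume "x \<in> {x. x > 0}"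
  then have "0 < x" by simp
  then obtain p q :: nat where "1/2 \<le> x * 4 ^ q / 4 ^ p" and "x * 4 ^ q / 4 ^ p \<le> 2"
    by (rule power4_rescaling_into_interval)
  moreover define y where "y = x * 4 ^ q / 4 ^ p"
  ultimately have "1/2 \<le> y" and "y \<le> 2"
    by simp_all
  then have "1/2 \<le> 1 / y"
    by (simp add: field_simps)
  have "min y 1 / min (1 / y) 1 = y"
    using \<open>1/2 \<le> y\<close> by (cases "y \<le> 1") (simp_all add: min_def field_simps)
  have "x = y * 4 ^ p / 4 ^ q"
    by (simp add: y_def)
  also have "\<dots> = min y 1 / min (1 / y) 1 * 4 ^ p / 4 ^ q"
    using \<open>min y 1 / min (1 / y) 1 = y\<close> by simp
  also have "\<dots> \<in> closure {real A / real B | A B. A \<in> APAL \<and> B \<in> APAL}"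
    using \<open>1/2 \<le> y\<close> \<open>1/2 \<le> 1 / y\<close>
    by (intro power4_quotient_in_closure_APAL_quotients) (auto simp: min_def)
  finally show "x \<in> closure {real A / real B | A B. A \<in> APAL \<and> B \<in> APAL}" .
qed

end
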